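(* Let $A$ be a Noetherian commutative ring with identity, let $A[\mathbf{x}]=A[x_1,\ldots,x_n]$ be equipped with a monomial order, let $I\subset A[\mathbf{x}]$ be an ideal, let $M=A[\mathbf{x}]/I$, and let $p\subset A$ be a prime ideal. The following two statements are equivalent: (a) the natural map $f:A_p\to M_p$ is a finite map (i.e. $M_p$ is a finitely generated $A_p$-module); (b) $\mathrm{in}(I)_{x_i^\infty}\,A_p=(1)$ for each $i=1,\ldots,n$.
   Context: A monomial order $>$ is a total order on monomials such that $\mathbf{x}^E>\mathbf{x}^F$ implies $\mathbf{x}^G\mathbf{x}^E>\mathbf{x}^G\mathbf{x}^F$, and $x_i>1$ for each $i$. $\mathrm{in}(f)$ is the greatest term $c\,\mathbf{x}^E$ ($c\neq0$) of a nonzero polynomial $f$; $\mathrm{in}(I)$ is the ideal generated by all $\mathrm{in}(f)$, $f\in I$. For an ideal $J\subset A[\mathbf{x}]$ and monomial $\mathbf{x}^E$, the coefficient ideal is $J_{\mathbf{x}^E}=(c\in A\mid c\,\mathbf{x}^E\in J)\subset A$. $\mathrm{in}(I)_{x_i^\infty}$ denotes the stationary limit (union) of the ascending chain of ideals $\mathrm{in}(I)_{x_i}\subset\mathrm{in}(I)_{x_i^2}\subset\cdots$ of $A$. *)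

theory Defs
  imports Main "HOL-Library.Poly_Mapping"
begin

definition is_ideal :: "'a::comm_ring_1 set \<Rightarrow> bool" where
  "is_ideal J \<longleftrightarrow> 0 \<in> J \<and> (\<forall>x\<in>J. \<forall>y\<in>J. x + y \<in> J) \<and> (\<forall>r. \<forall>x\<in>J. r * x \<in> J)"

definition ideal_of :: "'a::comm_ring_1 set \<Rightarrow> 'a set" where
  "ideal_of S = \<Inter>{J. is_ideal J \<and> S \<subseteq> J}"

definition prime_ideal :: "'a::comm_ring_1 set \<Rightarrow> bool" where
  "prime_ideal P \<longleftrightarrow> is_ideal P \<and> 1 \<notin> P \<and> (\<forall>a b. a * b \<in> P \<longrightarrow> a \<in> P \<or> b \<in> P)"

definition noetherian_ring :: "'a::comm_ring_1 itself \<Rightarrow> bool" where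
  "noetherian_ring _ \<longleftrightarrow> (\<forall>J::'a set. is_ideal J \<longrightarrow> (\<exists>F. finite F \<and> J = ideal_of F))"

type_synonym ('v, 'a) mpoly = "('v \<Rightarrow>\<^sub>0 nat) \<Rightarrow>\<^sub>0 'a"

text \<open>Monomials are exponent vectors; multiplication of monomials is addition of exponents.
  \<open>le\<close> is the (non-strict) order relation.\<close>
definition monomial_order :: "(('v \<Rightarrow>\<^sub>0 nat) \<Rightarrow> ('v \<Rightarrow>\<^sub>0 nat) \<Rightarrow> bool) \<Rightarrow> bool" where
  "monomial_order le \<longleftrightarrow>
     (\<forall>a. le a a) \<and> (\<forall>a b. le a b \<and> le b a \<longrightarrow> a = b) \<and>
     (\<forall>a b c. le a b \<and> le b c \<longrightarrow> le a c) \<and> (\<forall>a b. le a b \<or> le b a) \<and>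
     (\<forall>E F G :: 'v \<Rightarrow>\<^sub>0 nat. le F E \<and> E \<noteq> F \<longrightarrow> le (G + F) (G + E) \<and> G + E \<noteq> G + F) \<and>
     (\<forall>i::'v. le 0 (Poly_Mapping.single i (1::nat)) \<and> Poly_Mapping.single i (1::nat) \<noteq> 0)"

definition lead_monom :: "(('v \<Rightarrow>\<^sub>0 nat) \<Rightarrow> ('v \<Rightarrow>\<^sub>0 nat) \<Rightarrow> bool) \<Rightarrow> ('v, 'a::zero) mpoly \<Rightarrow> ('v \<Rightarrow>\<^sub>0 nat)" where
  "lead_monom le f = (THE m. m \<in> Poly_Mapping.keys f \<and> (\<forall>m'\<in>Poly_Mapping.keys f. le m' m))"

definition init_term :: "(('v \<Rightarrow>\<^sub>0 nat) \<Rightarrow> ('v \<Rightarrow>\<^sub>0 nat) \<Rightarrow> bool) \<Rightarrow> ('v, 'a::zero) mpoly \<Rightarrow> ('v, 'a) mpoly" where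
  "init_term le f = Poly_Mapping.single (lead_monom le f) (Poly_Mapping.lookup f (lead_monom le f))"

definition init_ideal :: "(('v \<Rightarrow>\<^sub>0 nat) \<Rightarrow> ('v \<Rightarrow>\<^sub>0 nat) \<Rightarrow> bool) \<Rightarrow> ('v, 'a::comm_ring_1) mpoly set \<Rightarrow> ('v, 'a) mpoly set" where
  "init_ideal le I = ideal_of {init_term le f | f. f \<in> I \<and> f \<noteq> 0}"

definition coeff_ideal :: "('v, 'a::comm_ring_1) mpoly set \<Rightarrow> ('v \<Rightarrow>\<^sub>0 nat) \<Rightarrow> 'a set" where
  "coeff_ideal J E = ideal_of {c. Poly_Mapping.single E c \<in> J}"

definition coeff_ideal_inf :: "('v, 'a::comm_ring_1) mpoly set \<Rightarrow> 'v \<Rightarrow> 'a set" where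
  "coeff_ideal_inf J i = (\<Union>k\<in>{1..}. coeff_ideal J (Poly_Mapping.single i k))"

text \<open>An A-module is given by an abelian group 'm with scalar action \<open>sc\<close>; we localize the
  quotient module 'm / N (N a submodule) at the multiplicative set A - P.
  Elements of the localization are fractions (m, s) with s \<notin> P, modulo \<open>loc_eq\<close>.\<close>

definition loc_eq :: "('a::comm_ring_1 \<Rightarrow> 'm::ab_group_add \<Rightarrow> 'm) \<Rightarrow> 'm set \<Rightarrow> 'a set \<Rightarrow> 'm \<times> 'a \<Rightarrow> 'm \<times> 'a \<Rightarrow> bool" where
  "loc_eq sc N P x y \<longleftrightarrow> (\<exists>u. u \<notin> P \<and> sc (u * snd y) (fst x) - sc (u * snd x) (fst y) \<in> N)"

definition loc_add :: "('a::comm_ring_1 \<Rightarrow> 'm::ab_group_add \<Rightarrow> 'm) \<Rightarrow> 'm \<times> 'a \<Rightarrow> 'm \<times> 'a \<Rightarrow> 'm \<times> 'a" where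
  "loc_add sc x y = (sc (snd y) (fst x) + sc (snd x) (fst y), snd x * snd y)"

definition loc_smult :: "('a::comm_ring_1 \<Rightarrow> 'm::ab_group_add \<Rightarrow> 'm) \<Rightarrow> 'a \<times> 'a \<Rightarrow> 'm \<times> 'a \<Rightarrow> 'm \<times> 'a" where
  "loc_smult sc c x = (sc (fst c) (fst x), snd c * snd x)"

inductive_set loc_span :: "('a::comm_ring_1 \<Rightarrow> 'm::ab_group_add \<Rightarrow> 'm) \<Rightarrow> 'a set \<Rightarrow> ('m \<times> 'a) set \<Rightarrow> ('m \<times> 'a) set"
  for sc P G where
  zero: "(0, 1) \<in> loc_span sc P G"
| step: "x \<in> loc_span sc P G \<Longrightarrow> g \<in> G \<Longrightarrow> r \<notin> P \<Longrightarrow> loc_add sc x (loc_smult sc (a, r) g) \<in> loc_span sc P G"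

text \<open>(m'/N)_P is a finitely generated A_P-module.\<close>
definition loc_fin_gen :: "('a::comm_ring_1 \<Rightarrow> 'm::ab_group_add \<Rightarrow> 'm) \<Rightarrow> 'm set \<Rightarrow> 'a set \<Rightarrow> bool" where
  "loc_fin_gen sc N P \<longleftrightarrow>
     (\<exists>G. finite G \<and> (\<forall>g\<in>G. snd g \<notin> P) \<and>
          (\<forall>m s. s \<notin> P \<longrightarrow> (\<exists>y\<in>loc_span sc P G. loc_eq sc N P (m, s) y)))"

text \<open>The extended ideal J A_P is the unit ideal: 1/1 lies in the A_P-span of {j/1 | j \<in> J}.\<close>
definition ext_ideal_unit :: "'a::comm_ring_1 set \<Rightarrow> 'a set \<Rightarrow> bool" where
  "ext_ideal_unit J P \<longleftrightarrow>
     (\<exists>y\<in>loc_span (*) P {(j, 1) | j. j \<in> J}. loc_eq (*) {0} P (1, 1) y)"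

text \<open>A-module structure of A[x] (hence of M = A[x]/I) via constants.\<close>
definition const_smult :: "'a::comm_ring_1 \<Rightarrow> ('v, 'a) mpoly \<Rightarrow> ('v, 'a) mpoly" where
  "const_smult c f = Poly_Mapping.single 0 c * f"

end

theory Submission
  imports Defs "Jordan_Normal_Form.Char_Poly"
begin

text \<open>
  Let M = A[x]/I. If in(I) contains c_i x_i^(k_i) with c_i not in p for every i, choose f_i in I
  with these initial terms. As c_i becomes a unit in A_p, dividing by f_i rewrites, in M_p, a
  monomial divisible by x_i^(k_i) as a combination of strictly smaller monomials. Since a monomial
  order on finitely many variables is a well-order (Dickson's lemma), M_p is generated by the finitely
  many monomials x^E with E_i < k_i for all i.

  Conversely, let m_1, ..., m_n generate M_p. Clearing a common denominator c not in p gives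
  c x_i m_j = sum_l b_jl m_l in M_p, so by the determinant trick chi_B(c x_i) kills every m_j, hence
  M_p, and w chi_B(c x_i) lies in I for some w not in p. As chi_B is monic of degree n, the initial
  term of x_i w chi_B(c x_i) is w c^n x_i^(n+1), and w c^n is not in p.
\<close>

section \<open>Dickson's lemma and monomial orders\<close>

definition monom_dvd :: "('v \<Rightarrow>\<^sub>0 nat) \<Rightarrow> ('v \<Rightarrow>\<^sub>0 nat) \<Rightarrow> bool" where
  "monom_dvd E F \<longleftrightarrow> (\<forall>v. Poly_Mapping.lookup E v \<le> Poly_Mapping.lookup F v)"

lemma monom_dvd_add: "monom_dvd E (D + E)"
  by (simp add: monom_dvd_def lookup_add)

lemma monom_dvd_trans: "monom_dvd D E \<Longrightarrow> monom_dvd E F \<Longrightarrow> monom_dvd D F"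
  unfolding monom_dvd_def using order_trans by blast

lemma monom_dvdE:
  assumes "monom_dvd E F"
  obtains D where "F = E + D"
proof
  show "F = E + (F - E)"
    using assms by (intro poly_mapping_eqI) (simp add: monom_dvd_def lookup_add lookup_minus)
qed

lemma monom_dvd_single:
  "monom_dvd E (Poly_Mapping.single i k) \<Longrightarrow> E = Poly_Mapping.single i (Poly_Mapping.lookup E i)"
  unfolding monom_dvd_def
  by (rule poly_mapping_eqI) (metis le_zero_eq lookup_single_eq lookup_single_not_eq)

lemma poly_mapping_expansion:
  "f = (\<Sum>k\<in>Poly_Mapping.keys f. Poly_Mapping.single k (Poly_Mapping.lookup f k))"
  by (rule poly_mapping_eqI) (simp add: lookup_sum lookup_single when_def in_keys_iff)

lemma wellorder_mono_subseq:
  fixes X :: "nat \<Rightarrow> 'a::wellorder"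
  shows "\<exists>r::nat \<Rightarrow> nat. strict_mono r \<and> mono (X \<circ> r)"
proof -
  obtain f where f: "strict_mono f" "monoseq (\<lambda>n. X (f n))"
    using seq_monosub by blast
  show ?thesis
  proof (cases "mono (X \<circ> f)")
    case True
    with f(1) show ?thesis by blast
  next
    case False
    then have antimono: "X (f n) \<le> X (f m)" if "m \<le> n" for m n
      using f(2) that unfolding monoseq_def mono_def by auto
    define a where "a = (LEAST a. a \<in> range (X \<circ> f))"
    have "a \<in> range (X \<circ> f)"
      unfolding a_def by (rule LeastI[of _ "X (f 0)"]) simp
    then obtain N where N: "X (f N) = a" by auto
    have "X (f (n + N)) = a" for n
      using antimono[of N "n + N"] Least_le[of "\<lambda>a. a \<in> range (X \<circ> f)"] N
      unfolding a_def by (simp add: order_antisym)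
    then have "mono (X \<circ> (\<lambda>n. f (n + N)))"
      by (simp add: mono_def)
    moreover have "strict_mono (\<lambda>n. f (n + N))"
      using f(1) by (simp add: strict_mono_def)
    ultimately show ?thesis by blast
  qed
qed

lemma monotone_coordinates_subseq:
  fixes s :: "nat \<Rightarrow> ('v \<Rightarrow>\<^sub>0 nat)"
  assumes "finite V"
  shows "\<exists>r::nat \<Rightarrow> nat. strict_mono r \<and> (\<forall>v\<in>V. mono (\<lambda>n. Poly_Mapping.lookup (s (r n)) v))"
  using assms
proof (induction V rule: finite_induct)
  case empty
  have "strict_mono (id :: nat \<Rightarrow> nat)" by (simp add: strict_mono_def)
  then show ?case by blast
next
  case (insert w V)
  then obtain r :: "nat \<Rightarrow> nat" where r: "strict_mono r" "\<forall>v\<in>V. mono (\<lambda>n. Poly_Mapping.lookup (s (r n)) v)"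
    by blast
  obtain r' :: "nat \<Rightarrow> nat" where r': "strict_mono r'" "mono ((\<lambda>n. Poly_Mapping.lookup (s (r n)) w) \<circ> r')"
    using wellorder_mono_subseq by blast
  have "mono (\<lambda>n. Poly_Mapping.lookup (s (r (r' n))) v)" if "v \<in> insert w V" for v
    using that r(2) r'(2) strict_mono_mono[OF r'(1)] by (auto simp: mono_def)
  with strict_mono_compose[OF r(1) r'(1)] show ?case by blast
qed

lemma dickson:
  fixes s :: "nat \<Rightarrow> ('v::finite \<Rightarrow>\<^sub>0 nat)"
  shows "\<exists>i j. i < j \<and> monom_dvd (s i) (s j)"
proof -
  obtain r :: "nat \<Rightarrow> nat" where "strict_mono r" "\<forall>v. mono (\<lambda>n. Poly_Mapping.lookup (s (r n)) v)"
    using monotone_coordinates_subseq[of UNIV s] by auto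
  then have "r 0 < r 1" "monom_dvd (s (r 0)) (s (r 1))"
    by (auto simp: strict_mono_def monom_dvd_def mono_def)
  then show ?thesis by blast
qed

locale monomial_ordering =
  fixes le :: "('v \<Rightarrow>\<^sub>0 nat) \<Rightarrow> ('v \<Rightarrow>\<^sub>0 nat) \<Rightarrow> bool"
  assumes monomial_order: "monomial_order le"
begin

lemma refl: "le E E"
  and antisym: "le E F \<Longrightarrow> le F E \<Longrightarrow> E = F"
  and trans: "le D E \<Longrightarrow> le E F \<Longrightarrow> le D F"
  and total: "le E F \<or> le F E"
  and zero_le_var: "le 0 (Poly_Mapping.single v 1)"
  using monomial_order unfolding monomial_order_def by blast+

lemma add_left_mono: "le F E \<Longrightarrow> le (G + F) (G + E)"
proof (cases "E = F")
  case False
  then show "le F E \<Longrightarrow> ?thesis" using monomial_order unfolding monomial_order_def by blast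
qed (simp add: refl)

lemma zero_le_add:
  assumes "le 0 D" "le 0 E"
  shows "le 0 (D + E)"
proof -
  have "le D (D + E)"
    using add_left_mono[OF assms(2), of D] by simp
  with assms(1) show ?thesis
    by (rule trans)
qed

lemma zero_le_single: "le 0 (Poly_Mapping.single v k)"
proof (induction k)
  case (Suc k)
  have "Poly_Mapping.single v (Suc k) = Poly_Mapping.single v k + Poly_Mapping.single v 1"
    by (simp flip: single_add)
  with Suc zero_le_var show ?case by (simp add: zero_le_add)
qed (simp add: refl)

lemma zero_le: "le 0 E"
proof -
  have "le 0 (\<Sum>v\<in>V. Poly_Mapping.single v (Poly_Mapping.lookup E v))" for V
    by (induction V rule: infinite_finite_induct) (simp_all add: refl zero_le_add zero_le_single)
  then show ?thesis
    by (metis poly_mapping_expansion)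
qed

lemma le_add: "le E (E + F)"
  using add_left_mono[OF zero_le, of E F] by simp

lemma le_if_monom_dvd: "monom_dvd E F \<Longrightarrow> le E F"
  by (metis le_add monom_dvdE)

lemma single_mono: "k \<le> k' \<Longrightarrow> le (Poly_Mapping.single i k) (Poly_Mapping.single i k')"
  by (rule le_if_monom_dvd) (simp add: monom_dvd_def lookup_single when_def)

lemma finite_has_greatest: "finite S \<Longrightarrow> S \<noteq> {} \<Longrightarrow> \<exists>E\<in>S. \<forall>F\<in>S. le F E"
proof (induction S rule: finite_ne_induct)
  case (insert D S)
  then obtain E where E: "E \<in> S" "\<forall>F\<in>S. le F E" by blast
  show ?case
  proof (cases "le D E")
    case True
    with E show ?thesis by blast
  next
    case False
    then have "le E D" using total by blast
    then have "\<forall>F\<in>insert D S. le F D" using E(2) refl trans[of _ E D] by blast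
    then show ?thesis by blast
  qed
qed (use refl in blast)

lemma lead_monom_eqI:
  "E \<in> Poly_Mapping.keys f \<Longrightarrow> (\<And>F. F \<in> Poly_Mapping.keys f \<Longrightarrow> le F E) \<Longrightarrow> lead_monom le f = E"
  unfolding lead_monom_def by (rule the_equality) (blast intro: antisym)+

lemma lead_monom_greatest:
  assumes "f \<noteq> 0"
  shows "lead_monom le f \<in> Poly_Mapping.keys f" and "F \<in> Poly_Mapping.keys f \<Longrightarrow> le F (lead_monom le f)"
proof -
  obtain E where "E \<in> Poly_Mapping.keys f" "\<forall>F\<in>Poly_Mapping.keys f. le F E"
    using finite_has_greatest[of "Poly_Mapping.keys f"] assms by auto
  moreover from this have "lead_monom le f = E" by (intro lead_monom_eqI) auto
  ultimately show "lead_monom le f \<in> Poly_Mapping.keys f" "F \<in> Poly_Mapping.keys f \<Longrightarrow> le F (lead_monom le f)"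
    by simp_all
qed

lemma lookup_sum_single_powers:
  fixes k n :: nat
  shows "k \<le> n \<Longrightarrow> Poly_Mapping.lookup (\<Sum>j\<le>n. Poly_Mapping.single (Poly_Mapping.single i j) (a j)) (Poly_Mapping.single i k) = a k"
  by (simp add: lookup_sum lookup_single when_def inj_eq[OF inj_single])

lemma lead_monom_sum_single_powers:
  assumes "a n \<noteq> 0"
  shows "lead_monom le (\<Sum>j\<le>n. Poly_Mapping.single (Poly_Mapping.single i j) (a j)) = Poly_Mapping.single i n"
proof (rule lead_monom_eqI)
  show "Poly_Mapping.single i n \<in> Poly_Mapping.keys (\<Sum>j\<le>n. Poly_Mapping.single (Poly_Mapping.single i j) (a j))"
    using assms by (simp add: in_keys_iff lookup_sum_single_powers)
next
  fix F assume "F \<in> Poly_Mapping.keys (\<Sum>j\<le>n. Poly_Mapping.single (Poly_Mapping.single i j) (a j))"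
  then have "F \<in> (\<Union>j\<le>n. Poly_Mapping.keys (Poly_Mapping.single (Poly_Mapping.single i j) (a j)))"
    by (rule subsetD[OF keys_sum])
  then obtain j where "j \<le> n" "F = Poly_Mapping.single i j"
    by (auto split: if_splits)
  then show "le F (Poly_Mapping.single i n)" by (simp add: single_mono)
qed

end

lemma monomial_order_wf:
  fixes le :: "('v::finite \<Rightarrow>\<^sub>0 nat) \<Rightarrow> ('v \<Rightarrow>\<^sub>0 nat) \<Rightarrow> bool"
  assumes "monomial_order le"
  shows "wf {(E, F). le E F \<and> E \<noteq> F}"
proof -
  interpret monomial_ordering le by (rule monomial_ordering.intro) fact
  have False if chain: "\<And>i. le (f (Suc i)) (f i) \<and> f (Suc i) \<noteq> f i" for f :: "nat \<Rightarrow> 'v \<Rightarrow>\<^sub>0 nat"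
  proof -
    have descending: "le (f j) (f i)" if "i \<le> j" for i j
      using that
    proof (induction j rule: dec_induct)
      case (step j)
      then show ?case using chain[of j] trans by blast
    qed (rule refl)
    obtain i j where "i < j" "monom_dvd (f i) (f j)"
      using dickson by blast
    then have "le (f i) (f (Suc i))"
      using descending[of "Suc i" j] le_if_monom_dvd trans by (meson Suc_leI)
    then show False using chain antisym by metis
  qed
  then show ?thesis unfolding wf_iff_no_infinite_down_chain by auto
qed

lemma is_ideal_add: "is_ideal J \<Longrightarrow> x \<in> J \<Longrightarrow> y \<in> J \<Longrightarrow> x + y \<in> J"
  and is_ideal_mult: "is_ideal J \<Longrightarrow> x \<in> J \<Longrightarrow> r * x \<in> J"
  and is_ideal_zero: "is_ideal J \<Longrightarrow> 0 \<in> J"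
  unfolding is_ideal_def by blast+

lemma is_ideal_sum: "is_ideal J \<Longrightarrow> (\<And>a. a \<in> A \<Longrightarrow> f a \<in> J) \<Longrightarrow> sum f A \<in> J"
  by (induction A rule: infinite_finite_induct) (simp_all add: is_ideal_zero is_ideal_add)

lemma is_ideal_ideal_of: "is_ideal (ideal_of S)"
  unfolding is_ideal_def ideal_of_def by blast

lemma subset_ideal_of: "S \<subseteq> ideal_of S"
  unfolding ideal_of_def by blast

lemma ideal_of_subset_iff: "is_ideal J \<Longrightarrow> ideal_of S \<subseteq> J \<longleftrightarrow> S \<subseteq> J"
  unfolding ideal_of_def by blast

lemma prime_ideal_one_notin: "prime_ideal P \<Longrightarrow> 1 \<notin> P"
  and prime_ideal_mult_notin: "prime_ideal P \<Longrightarrow> a \<notin> P \<Longrightarrow> b \<notin> P \<Longrightarrow> a * b \<notin> P"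
  and prime_ideal_is_ideal: "prime_ideal P \<Longrightarrow> is_ideal P"
  unfolding prime_ideal_def by blast+

lemma prime_ideal_power_notin: "prime_ideal P \<Longrightarrow> a \<notin> P \<Longrightarrow> a ^ n \<notin> P"
  by (induction n) (simp_all add: prime_ideal_one_notin prime_ideal_mult_notin)

lemma fst_loc_span_mem:
  assumes "y \<in> loc_span sc P G"
    and "0 \<in> S" "\<And>x z. x \<in> S \<Longrightarrow> z \<in> S \<Longrightarrow> x + z \<in> S" "\<And>a x. x \<in> S \<Longrightarrow> sc a x \<in> S"
    and "fst ` G \<subseteq> S"
  shows "fst y \<in> S"
  using assms(1) by induction (use assms(2-) in \<open>auto simp: loc_add_def loc_smult_def\<close>)

lemma snd_loc_span_notin:
  assumes "prime_ideal P" "\<And>g. g \<in> G \<Longrightarrow> snd g \<notin> P" "y \<in> loc_span sc P G"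
  shows "snd y \<notin> P"
  using assms(3) by induction
    (simp_all add: loc_add_def loc_smult_def assms(1,2) prime_ideal_one_notin prime_ideal_mult_notin)

lemma ext_ideal_unit_iff:
  assumes P: "prime_ideal P"
  shows "ext_ideal_unit J P \<longleftrightarrow> \<not> J \<subseteq> P"
proof
  assume "ext_ideal_unit J P"
  then obtain y where y: "y \<in> loc_span (*) P {(j, 1) | j. j \<in> J}" "loc_eq (*) {0} P (1, 1) y"
    unfolding ext_ideal_unit_def by blast
  then obtain u where u: "u \<notin> P" "u * snd y = u * fst y"
    unfolding loc_eq_def by auto
  have "fst y \<in> ideal_of J"
    by (rule fst_loc_span_mem[OF y(1)])
      (use is_ideal_ideal_of[of J] subset_ideal_of[of J] in \<open>auto simp: is_ideal_zero is_ideal_add is_ideal_mult\<close>)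
  then have "u * fst y \<in> ideal_of J"
    by (rule is_ideal_mult[OF is_ideal_ideal_of])
  moreover have "u * fst y \<notin> P"
  proof -
    have "snd y \<notin> P"
      using snd_loc_span_notin[OF P _ y(1)] prime_ideal_one_notin[OF P] by auto
    then show ?thesis
      using u prime_ideal_mult_notin[OF P] by metis
  qed
  ultimately show "\<not> J \<subseteq> P"
    using ideal_of_subset_iff[OF prime_ideal_is_ideal[OF P]] by blast
next
  assume "\<not> J \<subseteq> P"
  then obtain j where j: "j \<in> J" "j \<notin> P" by blast
  have "loc_add (*) (0, 1) (loc_smult (*) (1, j) (j, 1)) \<in> loc_span (*) P {(j, 1) | j. j \<in> J}"
    using j by (intro loc_span.step loc_span.zero) auto
  moreover have "loc_add (*) (0, 1) (loc_smult (*) (1, j) (j, 1)) = (j, j)"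
    by (simp add: loc_add_def loc_smult_def)
  moreover have "loc_eq (*) {0} P (1, 1) (j, j)"
    unfolding loc_eq_def using prime_ideal_one_notin[OF P] by (intro exI[of _ 1]) simp
  ultimately show "ext_ideal_unit J P"
    unfolding ext_ideal_unit_def by auto
qed

section \<open>Saturation of a submodule at a prime\<close>

text \<open>An element m lies in \<open>saturation sc P L\<close> iff m/1 lies in the localization L_P, viewed inside M_P.\<close>

definition saturation :: "('a::comm_ring_1 \<Rightarrow> 'b \<Rightarrow> 'b) \<Rightarrow> 'a set \<Rightarrow> 'b set \<Rightarrow> 'b set" where
  "saturation sc P L = {m. \<exists>d. d \<notin> P \<and> sc d m \<in> L}"

context Modules.module
begin

lemma subspace_saturation:
  assumes P: "prime_ideal P" and L: "subspace L"
  shows "subspace (saturation scale P L)"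
proof (rule subspaceI)
  show "0 \<in> saturation scale P L"
    using prime_ideal_one_notin[OF P] subspace_0[OF L] unfolding saturation_def by auto
next
  fix x y assume "x \<in> saturation scale P L" "y \<in> saturation scale P L"
  then obtain d e where d: "d \<notin> P" "d *s x \<in> L" and e: "e \<notin> P" "e *s y \<in> L"
    unfolding saturation_def by blast
  have "(e * d) *s (x + y) = e *s (d *s x) + d *s (e *s y)"
    by (simp add: scale_right_distrib mult.commute)
  also have "\<dots> \<in> L"
    by (rule subspace_add[OF L subspace_scale[OF L d(2)] subspace_scale[OF L e(2)]])
  finally show "x + y \<in> saturation scale P L"
    unfolding saturation_def using prime_ideal_mult_notin[OF P e(1) d(1)] by blast
next
  fix c x assume "x \<in> saturation scale P L"
  then obtain d where "d \<notin> P" "d *s x \<in> L"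
    unfolding saturation_def by blast
  moreover have "d *s (c *s x) \<in> L"
    using subspace_scale[OF L \<open>d *s x \<in> L\<close>, of c] by (metis scale_left_commute)
  ultimately show "c *s x \<in> saturation scale P L"
    unfolding saturation_def by blast
qed

lemma subset_saturation: "prime_ideal P \<Longrightarrow> L \<subseteq> saturation scale P L"
proof
  fix m assume "prime_ideal P" "m \<in> L"
  then show "m \<in> saturation scale P L"
    unfolding saturation_def using prime_ideal_one_notin by (intro CollectI exI[of _ 1]) simp
qed

lemma saturation_cancel:
  assumes "prime_ideal P" "c \<notin> P" "c *s m \<in> saturation scale P L"
  shows "m \<in> saturation scale P L"
proof -
  obtain d where "d \<notin> P" "d *s (c *s m) \<in> L"
    using assms(3) unfolding saturation_def by blast
  then have "d * c \<notin> P" "(d * c) *s m \<in> L"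
    using prime_ideal_mult_notin[OF assms(1)] assms(2) by simp_all
  then show ?thesis
    unfolding saturation_def by blast
qed

lemma saturation_common_denominator:
  assumes P: "prime_ideal P" and L: "subspace L" and "finite J"
    and "\<And>j. j \<in> J \<Longrightarrow> y j \<in> saturation scale P L"
  shows "\<exists>c. c \<notin> P \<and> (\<forall>j\<in>J. c *s y j \<in> L)"
  using assms(3,4)
proof (induction J rule: finite_induct)
  case empty
  show ?case using prime_ideal_one_notin[OF P] by blast
next
  case (insert j J)
  then obtain c where c: "c \<notin> P" "\<forall>j\<in>J. c *s y j \<in> L" by blast
  obtain d where d: "d \<notin> P" "d *s y j \<in> L"
    using insert.prems unfolding saturation_def by blast
  have "(c * d) *s y j \<in> L"
    using d(2) L subspace_scale by (metis scale_scale)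
  moreover have "(c * d) *s y i \<in> L" if "i \<in> J" for i
    using c(2) that L subspace_scale by (metis mult.commute scale_scale)
  ultimately have "\<forall>i\<in>insert j J. (c * d) *s y i \<in> L" by blast
  then show ?case using prime_ideal_mult_notin[OF P c(1) d(1)] by blast
qed

lemma mem_span_Un_subspace:
  assumes "finite B" "subspace N"
  shows "x \<in> span (B \<union> N) \<longleftrightarrow> (\<exists>u. x - (\<Sum>b\<in>B. u b *s b) \<in> N)"
proof -
  have "span N = N"
    using assms(2) by simp
  have span_eq: "span (B \<union> N) = {s + n | s n. s \<in> range (\<lambda>u. \<Sum>b\<in>B. u b *s b) \<and> n \<in> N}"
    unfolding span_Un span_finite[OF assms(1)] \<open>span N = N\<close> ..
  show ?thesis
  proof
    assume "x \<in> span (B \<union> N)"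
    then obtain u n where "x = (\<Sum>b\<in>B. u b *s b) + n" "n \<in> N"
      unfolding span_eq by blast
    then have "x - (\<Sum>b\<in>B. u b *s b) \<in> N" by simp
    then show "\<exists>u. x - (\<Sum>b\<in>B. u b *s b) \<in> N" by blast
  next
    assume "\<exists>u. x - (\<Sum>b\<in>B. u b *s b) \<in> N"
    then obtain u where "x - (\<Sum>b\<in>B. u b *s b) \<in> N" by blast
    moreover have "x = (\<Sum>b\<in>B. u b *s b) + (x - (\<Sum>b\<in>B. u b *s b))" by simp
    ultimately show "x \<in> span (B \<union> N)"
      unfolding span_eq by blast
  qed
qed

lemma loc_span_sum:
  assumes P: "prime_ideal P" and e: "e \<notin> P" and "finite C" and "\<And>b. b \<in> C \<Longrightarrow> (b, 1) \<in> G"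
  shows "\<exists>y\<in>loc_span scale P G. snd y \<notin> P \<and> e *s fst y = snd y *s (\<Sum>b\<in>C. u b *s b)"
  using assms(3,4)
proof (induction C rule: finite_induct)
  case empty
  show ?case
    by (intro bexI[OF _ loc_span.zero]) (simp add: prime_ideal_one_notin[OF P])
next
  case (insert b C)
  then obtain y where y: "y \<in> loc_span scale P G" "snd y \<notin> P"
      "e *s fst y = snd y *s (\<Sum>b\<in>C. u b *s b)"
    by blast
  define y' where "y' = loc_add scale y (loc_smult scale (u b, e) (b, 1))"
  have "y' \<in> loc_span scale P G"
    unfolding y'_def using y(1) insert.prems e by (intro loc_span.step) auto
  moreover have "snd y' \<notin> P"
    using prime_ideal_mult_notin[OF P y(2) e] by (simp add: y'_def loc_add_def loc_smult_def)
  moreover have "e *s fst y' = snd y' *s (\<Sum>b\<in>insert b C. u b *s b)"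
  proof -
    have "e *s fst y' = e *s (e *s fst y) + (e * snd y) *s (u b *s b)"
      by (simp add: y'_def loc_add_def loc_smult_def scale_right_distrib ac_simps)
    also have "\<dots> = snd y' *s (\<Sum>b\<in>insert b C. u b *s b)"
      using insert.hyps y(3)
      by (simp add: y'_def loc_add_def loc_smult_def scale_right_distrib ac_simps scale_left_commute)
    finally show ?thesis .
  qed
  ultimately show ?case by blast
qed

lemma saturation_UNIV_if_loc_fin_gen:
  assumes P: "prime_ideal P" and "loc_fin_gen scale N P"
  shows "\<exists>B. finite B \<and> saturation scale P (span (B \<union> N)) = UNIV"
proof -
  obtain G where G: "finite G" "\<And>g. g \<in> G \<Longrightarrow> snd g \<notin> P"
    and gen: "\<And>m s. s \<notin> P \<Longrightarrow> \<exists>y\<in>loc_span scale P G. loc_eq scale N P (m, s) y"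
    using assms(2) unfolding loc_fin_gen_def by blast
  have "m \<in> saturation scale P (span (fst ` G \<union> N))" for m
  proof -
    obtain y where y: "y \<in> loc_span scale P G" "loc_eq scale N P (m, 1) y"
      using gen prime_ideal_one_notin[OF P] by blast
    then obtain u where u: "u \<notin> P" "(u * snd y) *s m - u *s fst y \<in> N"
      unfolding loc_eq_def by auto
    have "fst y \<in> span (fst ` G)"
      by (rule fst_loc_span_mem[OF y(1)]) (simp_all add: span_zero span_add span_scale span_superset)
    then have "u *s fst y \<in> span (fst ` G \<union> N)"
      using span_mono[of "fst ` G" "fst ` G \<union> N"] span_scale by blast
    moreover have "(u * snd y) *s m - u *s fst y \<in> span (fst ` G \<union> N)"
      using u(2) span_superset[of "fst ` G \<union> N"] by blast
    ultimately have "(u * snd y) *s m \<in> span (fst ` G \<union> N)"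
      by (metis diff_add_cancel span_add)
    moreover have "u * snd y \<notin> P"
      using prime_ideal_mult_notin[OF P u(1) snd_loc_span_notin[OF P G(2) y(1)]] .
    ultimately show ?thesis
      unfolding saturation_def by blast
  qed
  then show ?thesis
    using G(1) by blast
qed

lemma loc_fin_gen_if_saturation_UNIV:
  assumes P: "prime_ideal P" and N: "subspace N"
    and B: "finite B" "saturation scale P (span (B \<union> N)) = UNIV"
  shows "loc_fin_gen scale N P"
proof -
  let ?G = "(\<lambda>b. (b, 1)) ` B"
  have "\<exists>y\<in>loc_span scale P ?G. loc_eq scale N P (m, s) y" if s: "s \<notin> P" for m s
  proof -
    have "m \<in> saturation scale P (span (B \<union> N))"
      using B(2) by simp
    then obtain d where d: "d \<notin> P" "d *s m \<in> span (B \<union> N)"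
      unfolding saturation_def by blast
    then obtain u where u: "d *s m - (\<Sum>b\<in>B. u b *s b) \<in> N"
      using mem_span_Un_subspace[OF B(1) N] by blast
    obtain y where y: "y \<in> loc_span scale P ?G"
      "(s * d) *s fst y = snd y *s (\<Sum>b\<in>B. u b *s b)"
      using loc_span_sum[OF P prime_ideal_mult_notin[OF P s d(1)] B(1), of ?G u] by blast
    have "snd y *s (d *s m - (\<Sum>b\<in>B. u b *s b)) = (snd y * d) *s m - (s * d) *s fst y"
      by (simp add: scale_right_diff_distrib y(2))
    then have "(d * snd y) *s m - (d * s) *s fst y = snd y *s (d *s m - (\<Sum>b\<in>B. u b *s b))"
      by (simp add: ac_simps)
    also have "\<dots> \<in> N"
      by (rule subspace_scale[OF N u])
    finally show ?thesis
      unfolding loc_eq_def by (intro bexI[OF _ y(1)] exI[of _ d]) (simp add: d(1))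
  qed
  then show ?thesis
    unfolding loc_fin_gen_def using B(1) prime_ideal_one_notin[OF P]
    by (intro exI[of _ ?G] conjI) auto
qed

lemma saturation_relations:
  fixes y :: "nat \<Rightarrow> 'b"
  assumes P: "prime_ideal P" and N: "subspace N" and bs: "distinct bs"
    and sat: "saturation scale P (span (set bs \<union> N)) = UNIV"
  shows "\<exists>c a. c \<notin> P \<and> (\<forall>j<k. c *s y j - (\<Sum>l<length bs. a j l *s bs ! l) \<in> N)"
proof -
  have "y j \<in> saturation scale P (span (set bs \<union> N))" for j
    using sat by simp
  then obtain c where c: "c \<notin> P" "\<forall>j\<in>{..<k}. c *s y j \<in> span (set bs \<union> N)"
    using saturation_common_denominator[OF P subspace_span finite_lessThan, where y = y] by blast
  have "\<forall>j\<in>{..<k}. \<exists>a. c *s y j - (\<Sum>l<length bs. a l *s bs ! l) \<in> N"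
  proof
    fix j assume "j \<in> {..<k}"
    obtain u where "c *s y j - (\<Sum>b\<in>set bs. u b *s b) \<in> N"
      using c(2) \<open>j \<in> {..<k}\<close> mem_span_Un_subspace[OF finite_set N] by blast
    moreover have "(\<Sum>b\<in>set bs. u b *s b) = (\<Sum>l<length bs. u (bs ! l) *s bs ! l)"
      using sum.reindex_bij_betw[OF bij_betw_nth[OF bs refl], where g = "\<lambda>b. u b *s b"]
      by (simp add: lessThan_atLeast0)
    ultimately show "\<exists>a. c *s y j - (\<Sum>l<length bs. a l *s bs ! l) \<in> N" by auto
  qed
  from bchoice[OF this] obtain a
    where "\<forall>j\<in>{..<k}. c *s y j - (\<Sum>l<length bs. a j l *s bs ! l) \<in> N" ..
  then show ?thesis using c(1) by auto
qed

end

interpretation mpoly_module: Modules.module "const_smult :: 'a::comm_ring_1 \<Rightarrow> ('v, 'a) mpoly \<Rightarrow> ('v, 'a) mpoly"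
  by unfold_locales (simp_all add: const_smult_def distrib_left distrib_right single_add mult_single flip: mult.assoc)

lemma const_smult_single: "const_smult c (Poly_Mapping.single E a) = Poly_Mapping.single E (c * a)"
  by (simp add: const_smult_def mult_single)

lemma monom_mult_expansion:
  assumes "L \<in> Poly_Mapping.keys f"
  shows "Poly_Mapping.single D 1 * f = const_smult (Poly_Mapping.lookup f L) (Poly_Mapping.single (L + D) 1)
    + (\<Sum>F\<in>Poly_Mapping.keys f - {L}. const_smult (Poly_Mapping.lookup f F) (Poly_Mapping.single (D + F) 1))"
  by (subst poly_mapping_expansion[of f])
    (simp add: sum.remove[OF finite_keys assms] distrib_left sum_distrib_left mult_single
      const_smult_single add.commute)

lemma subspace_if_is_ideal: "is_ideal I \<Longrightarrow> mpoly_module.subspace I"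
  unfolding mpoly_module.subspace_def is_ideal_def const_smult_def by blast

lemma is_ideal_Sum_any: "is_ideal J \<Longrightarrow> (\<And>a. g a \<in> J) \<Longrightarrow> Sum_any g \<in> J"
  unfolding Sum_any.expand_set by (rule is_ideal_sum)

lemma is_ideal_coeffs_at_divisors:
  assumes P: "is_ideal P"
  shows "is_ideal {g :: ('v, 'a::comm_ring_1) mpoly. \<forall>F. monom_dvd F E \<longrightarrow> Poly_Mapping.lookup g F \<in> P}"
proof -
  have "Poly_Mapping.lookup (r * g) F \<in> P"
    if g: "\<forall>F. monom_dvd F E \<longrightarrow> Poly_Mapping.lookup g F \<in> P" and F: "monom_dvd F E"
    for r g :: "('v, 'a) mpoly" and F
  proof -
    have "(Poly_Mapping.lookup g q when F = l + q) \<in> P" for l q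
      using g F monom_dvd_add[of q l] monom_dvd_trans is_ideal_zero[OF P] by (auto simp: when_def)
    then show ?thesis
      unfolding lookup_mult by (intro is_ideal_Sum_any[OF P] is_ideal_mult[OF P])
  qed
  then show ?thesis
    using P unfolding is_ideal_def by (simp add: lookup_add)
qed

lemma lead_monom_dvd_if_single_mem_init_ideal:
  fixes le :: "('v \<Rightarrow>\<^sub>0 nat) \<Rightarrow> ('v \<Rightarrow>\<^sub>0 nat) \<Rightarrow> bool"
  assumes P: "is_ideal P" and c: "Poly_Mapping.single E c \<in> init_ideal le I" "c \<notin> P"
  shows "\<exists>f\<in>I. monom_dvd (lead_monom le f) E \<and> Poly_Mapping.lookup f (lead_monom le f) \<notin> P"
proof (rule ccontr)
  let ?Q = "{g. \<forall>F. monom_dvd F E \<longrightarrow> Poly_Mapping.lookup g F \<in> P}"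
  assume "\<not> ?thesis"
  then have "{init_term le f | f. f \<in> I \<and> f \<noteq> 0} \<subseteq> ?Q"
    using is_ideal_zero[OF P] by (auto simp: init_term_def lookup_single when_def)
  then have "init_ideal le I \<subseteq> ?Q"
    unfolding init_ideal_def using ideal_of_subset_iff[OF is_ideal_coeffs_at_divisors[OF P]] by blast
  then have "c \<in> P"
    using c(1) by (force simp: monom_dvd_def)
  with c(2) show False ..
qed

lemma lead_power_if_coeff_ideal_inf_not_subset:
  fixes le :: "('v \<Rightarrow>\<^sub>0 nat) \<Rightarrow> ('v \<Rightarrow>\<^sub>0 nat) \<Rightarrow> bool"
  assumes P: "is_ideal P" and "\<not> coeff_ideal_inf (init_ideal le I) i \<subseteq> P"
  shows "\<exists>f k. f \<in> I \<and> lead_monom le f = Poly_Mapping.single i k \<and>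
    Poly_Mapping.lookup f (Poly_Mapping.single i k) \<notin> P"
proof -
  obtain k where "\<not> coeff_ideal (init_ideal le I) (Poly_Mapping.single i k) \<subseteq> P"
    using assms(2) unfolding coeff_ideal_inf_def by blast
  then have "\<not> {c. Poly_Mapping.single (Poly_Mapping.single i k) c \<in> init_ideal le I} \<subseteq> P"
    unfolding coeff_ideal_def ideal_of_subset_iff[OF P] .
  then obtain c where "Poly_Mapping.single (Poly_Mapping.single i k) c \<in> init_ideal le I" "c \<notin> P"
    by blast
  then obtain f where f: "f \<in> I" "monom_dvd (lead_monom le f) (Poly_Mapping.single i k)"
      "Poly_Mapping.lookup f (lead_monom le f) \<notin> P"
    using lead_monom_dvd_if_single_mem_init_ideal[OF P] by blast
  define k' where "k' = Poly_Mapping.lookup (lead_monom le f) i"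
  have "lead_monom le f = Poly_Mapping.single i k'"
    unfolding k'_def using f(2) by (rule monom_dvd_single)
  with f show ?thesis by auto
qed

lemma lead_coeff_mem_coeff_ideal_inf:
  fixes le :: "('v \<Rightarrow>\<^sub>0 nat) \<Rightarrow> ('v \<Rightarrow>\<^sub>0 nat) \<Rightarrow> bool"
  assumes "f \<in> I" "f \<noteq> 0" "lead_monom le f = Poly_Mapping.single i k" "0 < k"
  shows "Poly_Mapping.lookup f (Poly_Mapping.single i k) \<in> coeff_ideal_inf (init_ideal le I) i"
proof -
  have "init_term le f \<in> init_ideal le I"
    unfolding init_ideal_def using assms(1,2) by (intro subsetD[OF subset_ideal_of]) blast
  then have "Poly_Mapping.lookup f (Poly_Mapping.single i k) \<in> coeff_ideal (init_ideal le I) (Poly_Mapping.single i k)"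
    unfolding coeff_ideal_def init_term_def assms(3) by (intro subsetD[OF subset_ideal_of]) simp
  then show ?thesis
    using assms(4) unfolding coeff_ideal_inf_def by auto
qed

section \<open>Pure powers in the initial ideal give finiteness\<close>

definition box :: "('v \<Rightarrow> nat) \<Rightarrow> ('v \<Rightarrow>\<^sub>0 nat) set" where
  "box k = {E. \<forall>v. Poly_Mapping.lookup E v < k v}"

lemma finite_box: "finite (box (k :: 'v::finite \<Rightarrow> nat))"
proof -
  have "box k \<subseteq> Abs_poly_mapping ` PiE UNIV (\<lambda>v. {..<k v})"
  proof
    fix E assume "E \<in> box k"
    then have "Poly_Mapping.lookup E \<in> PiE UNIV (\<lambda>v. {..<k v})"
      by (auto simp: box_def)
    then show "E \<in> Abs_poly_mapping ` PiE UNIV (\<lambda>v. {..<k v})"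
      by (metis image_eqI lookup_inverse)
  qed
  then show ?thesis
    by (rule finite_subset) (simp add: finite_PiE)
qed

lemma (in monomial_ordering) monom_mem_saturation_reduce:
  assumes P: "prime_ideal P" and N: "mpoly_module.subspace N" and "I \<subseteq> N"
    and I: "is_ideal I" and "g \<in> I" and coeff: "Poly_Mapping.lookup g (lead_monom le g) \<notin> P"
    and smaller: "\<And>F. le F (lead_monom le g + D) \<Longrightarrow> F \<noteq> lead_monom le g + D \<Longrightarrow>
      Poly_Mapping.single F 1 \<in> saturation const_smult P N"
  shows "Poly_Mapping.single (lead_monom le g + D) 1 \<in> saturation const_smult P N"
    (is "_ \<in> ?S")
proof -
  let ?L = "lead_monom le g"
  let ?tail = "\<Sum>F\<in>Poly_Mapping.keys g - {?L}. const_smult (Poly_Mapping.lookup g F) (Poly_Mapping.single (D + F) 1)"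
  have S: "mpoly_module.subspace ?S"
    by (rule mpoly_module.subspace_saturation[OF P N])
  have "g \<noteq> 0"
    using coeff is_ideal_zero[OF prime_ideal_is_ideal[OF P]] by auto
  note keys = lead_monom_greatest[OF this]
  have "Poly_Mapping.single D 1 * g \<in> ?S"
    using \<open>I \<subseteq> N\<close> mpoly_module.subset_saturation[OF P] is_ideal_mult[OF I \<open>g \<in> I\<close>] by blast
  moreover have "?tail \<in> ?S"
  proof (intro mpoly_module.subspace_sum[OF S] mpoly_module.subspace_scale[OF S] smaller)
    fix F assume "F \<in> Poly_Mapping.keys g - {?L}"
    then have "le F ?L" "F \<noteq> ?L"
      using keys(2) by auto
    then show "le (D + F) (?L + D)" "D + F \<noteq> ?L + D"
      using add_left_mono[of F ?L D] by (simp_all add: add.commute)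
  qed
  ultimately have "Poly_Mapping.single D 1 * g - ?tail \<in> ?S"
    by (rule mpoly_module.subspace_diff[OF S])
  then have "const_smult (Poly_Mapping.lookup g ?L) (Poly_Mapping.single (?L + D) 1) \<in> ?S"
    unfolding monom_mult_expansion[OF keys(1), of D] by simp
  then show ?thesis
    by (rule mpoly_module.saturation_cancel[OF P coeff])
qed

lemma monom_mem_saturation_box:
  fixes le :: "('v::finite \<Rightarrow>\<^sub>0 nat) \<Rightarrow> ('v \<Rightarrow>\<^sub>0 nat) \<Rightarrow> bool"
    and f :: "'v \<Rightarrow> ('v, 'a::comm_ring_1) mpoly"
  assumes mo: "monomial_order le" and I: "is_ideal I" and P: "prime_ideal P"
    and f: "\<And>i. f i \<in> I" and lead: "\<And>i. lead_monom le (f i) = Poly_Mapping.single i (k i)"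
    and coeff: "\<And>i. Poly_Mapping.lookup (f i) (Poly_Mapping.single i (k i)) \<notin> P"
  shows "Poly_Mapping.single E 1
    \<in> saturation const_smult P (mpoly_module.span ((\<lambda>E. Poly_Mapping.single E 1) ` box k \<union> I))"
proof -
  interpret monomial_ordering le by (rule monomial_ordering.intro) fact
  let ?N = "mpoly_module.span ((\<lambda>E. Poly_Mapping.single E 1) ` box k \<union> I)"
  have N: "mpoly_module.subspace ?N"
    by (rule mpoly_module.subspace_span)
  have "I \<subseteq> ?N"
    using mpoly_module.span_superset by blast
  show ?thesis
  proof (induction E rule: wf_induct[OF monomial_order_wf[OF mo]])
    case (1 E)
    show ?case
    proof (cases "E \<in> box k")
      case True
      then have "Poly_Mapping.single E 1 \<in> ?N"
        by (intro mpoly_module.span_base UnI1 imageI)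
      then show ?thesis
        using mpoly_module.subset_saturation[OF P] by blast
    next
      case False
      then obtain i where "k i \<le> Poly_Mapping.lookup E i"
        by (auto simp: box_def not_less)
      then have "monom_dvd (lead_monom le (f i)) E"
        by (auto simp: lead monom_dvd_def lookup_single when_def)
      then obtain D where E: "E = lead_monom le (f i) + D"
        by (rule monom_dvdE)
      show ?thesis
        unfolding E
      proof (rule monom_mem_saturation_reduce[OF P N \<open>I \<subseteq> ?N\<close> I f])
        show "Poly_Mapping.lookup (f i) (lead_monom le (f i)) \<notin> P"
          using coeff[of i] by (simp add: lead)
        fix F assume "le F (lead_monom le (f i) + D)" "F \<noteq> lead_monom le (f i) + D"
        then show "Poly_Mapping.single F 1 \<in> saturation const_smult P ?N"
          using 1 unfolding E by blast
      qed
    qed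
  qed
qed

lemma loc_fin_gen_if_lead_powers:
  fixes le :: "('v::finite \<Rightarrow>\<^sub>0 nat) \<Rightarrow> ('v \<Rightarrow>\<^sub>0 nat) \<Rightarrow> bool"
    and f :: "'v \<Rightarrow> ('v, 'a::comm_ring_1) mpoly"
  assumes mo: "monomial_order le" and I: "is_ideal I" and P: "prime_ideal P"
    and f: "\<And>i. f i \<in> I" and lead: "\<And>i. lead_monom le (f i) = Poly_Mapping.single i (k i)"
    and coeff: "\<And>i. Poly_Mapping.lookup (f i) (Poly_Mapping.single i (k i)) \<notin> P"
  shows "loc_fin_gen const_smult I P"
proof (rule mpoly_module.loc_fin_gen_if_saturation_UNIV[OF P subspace_if_is_ideal[OF I]])
  let ?B = "(\<lambda>E. Poly_Mapping.single E 1) ` box k"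
  let ?S = "saturation const_smult P (mpoly_module.span (?B \<union> I))"
  show "finite ?B"
    by (simp add: finite_box)
  have S: "mpoly_module.subspace ?S"
    by (intro mpoly_module.subspace_saturation P mpoly_module.subspace_span)
  have "m \<in> ?S" for m
  proof -
    have "m = (\<Sum>E\<in>Poly_Mapping.keys m. const_smult (Poly_Mapping.lookup m E) (Poly_Mapping.single E 1))"
      by (simp add: const_smult_single flip: poly_mapping_expansion)
    also have "\<dots> \<in> ?S"
      by (intro mpoly_module.subspace_sum[OF S] mpoly_module.subspace_scale[OF S]
          monom_mem_saturation_box[OF mo I P f lead coeff])
    finally show ?thesis .
  qed
  then show "?S = UNIV" by blast
qed

section \<open>The determinant trick\<close>

lemma mat_vec_entry:
  assumes "A \<in> carrier_mat n n" "v \<in> carrier_vec n" "j < n"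
  shows "(A *\<^sub>v v) $ j = (\<Sum>l<n. A $$ (j, l) * v $ l)"
  using assms by (simp add: scalar_prod_def row_def atLeast0LessThan)

lemma char_poly_mult_mem_ideal:
  fixes B :: "'a::comm_ring_1 mat" and \<phi> :: "'a \<Rightarrow> 'r::comm_ring_1"
  assumes hom: "comm_ring_hom \<phi>" and I: "is_ideal I" and B: "B \<in> carrier_mat n n"
    and rel: "\<And>j. j < n \<Longrightarrow> t * m j - (\<Sum>l<n. \<phi> (B $$ (j, l)) * m l) \<in> I"
    and j: "j < n"
  shows "poly (map_poly \<phi> (char_poly B)) t * m j \<in> I"
proof -
  define M where "M = map_mat (\<lambda>p. poly p t) (char_poly_matrix (map_mat \<phi> B))"
  define v where "v = vec n m"
  have M: "M \<in> carrier_mat n n" and v: "v \<in> carrier_vec n"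
    using B by (simp_all add: M_def v_def)
  have "det M = poly (char_poly (map_mat \<phi> B)) t"
    unfolding M_def char_poly_def by (rule comm_ring_hom.hom_det[OF poly_hom.comm_ring_hom_axioms])
  then have detM: "det M = poly (map_poly \<phi> (char_poly B)) t"
    by (simp add: comm_ring_hom.char_poly_hom[OF hom B])
  have Mv: "(M *\<^sub>v v) $ i \<in> I" if i: "i < n" for i
  proof -
    have "(M *\<^sub>v v) $ i = (\<Sum>l<n. (if l = i then t * m i else 0) - \<phi> (B $$ (i, l)) * m l)"
      unfolding mat_vec_entry[OF M v i]
      by (rule sum.cong) (use B i in \<open>auto simp: M_def v_def char_poly_matrix_def left_diff_distrib\<close>)
    also have "\<dots> = t * m i - (\<Sum>l<n. \<phi> (B $$ (i, l)) * m l)"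
      using i by (simp add: sum_subtractf)
    finally show ?thesis
      using rel[OF i] by simp
  qed
  obtain adj where adj: "adj \<in> carrier_mat n n" "adj * M = det M \<cdot>\<^sub>m 1\<^sub>m n"
    using adj_mat[OF M] by blast
  have "det M * m j = ((det M \<cdot>\<^sub>m 1\<^sub>m n) *\<^sub>v v) $ j"
    using j v by (simp add: mat_vec_entry v_def)
  also have "\<dots> = (adj *\<^sub>v (M *\<^sub>v v)) $ j"
    by (simp add: assoc_mult_mat_vec[OF adj(1) M v] flip: adj(2))
  also have "\<dots> = (\<Sum>l<n. adj $$ (j, l) * (M *\<^sub>v v) $ l)"
    by (rule mat_vec_entry[OF adj(1) mult_mat_vec_carrier[OF M v] j])
  also have "\<dots> \<in> I"
    using Mv by (intro is_ideal_sum[OF I] is_ideal_mult[OF I]) auto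
  finally show ?thesis
    unfolding detM .
qed

lemma comm_ring_hom_single_zero: "comm_ring_hom (Poly_Mapping.single 0 :: 'a::comm_ring_1 \<Rightarrow> ('v, 'a) mpoly)"
  by unfold_locales (simp_all add: single_add mult_single)

lemma monic_relation_if_loc_fin_gen:
  fixes I :: "('v, 'a::comm_ring_1) mpoly set" and t :: "('v, 'a) mpoly"
  assumes I: "is_ideal I" and P: "prime_ideal P" and fg: "loc_fin_gen const_smult I P"
  shows "\<exists>p w c. lead_coeff p = 1 \<and> w \<notin> P \<and> c \<notin> P \<and>
    const_smult w (poly (map_poly (Poly_Mapping.single 0) p) (const_smult c t)) \<in> I"
proof -
  have N: "mpoly_module.subspace I"
    by (rule subspace_if_is_ideal[OF I])
  obtain B where "finite B" and sat: "saturation const_smult P (mpoly_module.span (B \<union> I)) = UNIV"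
    using mpoly_module.saturation_UNIV_if_loc_fin_gen[OF P fg] by blast
  then obtain bs where bs: "distinct bs" "saturation const_smult P (mpoly_module.span (set bs \<union> I)) = UNIV"
    using finite_distinct_list by metis
  define n where "n = length bs"
  define m where "m l = bs ! l" for l
  obtain c b where c: "c \<notin> P"
    and rel: "\<And>j. j < n \<Longrightarrow> const_smult c (t * m j) - (\<Sum>l<n. const_smult (b j l) (m l)) \<in> I"
    using mpoly_module.saturation_relations[OF P N bs, where k = n and y = "\<lambda>j. t * m j"]
    unfolding n_def m_def by blast
  obtain w \<beta> where w: "w \<notin> P"
    and one: "const_smult w 1 - (\<Sum>l<n. const_smult (\<beta> l) (m l)) \<in> I"
    using mpoly_module.saturation_relations[OF P N bs, where k = 1 and y = "\<lambda>_. 1"]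
    unfolding n_def m_def by blast
  define Bm where "Bm = mat n n (\<lambda>(j, l). b j l)"
  have Bm: "Bm \<in> carrier_mat n n"
    by (simp add: Bm_def)
  define h where "h = poly (map_poly (Poly_Mapping.single 0) (char_poly Bm)) (const_smult c t)"
  have hm: "h * m j \<in> I" if "j < n" for j
    unfolding h_def
    by (rule char_poly_mult_mem_ideal[OF comm_ring_hom_single_zero I Bm _ that])
      (use rel in \<open>simp add: Bm_def const_smult_def mult.assoc\<close>)
  have "const_smult w h = h * (const_smult w 1 - (\<Sum>l<n. const_smult (\<beta> l) (m l)))
      + (\<Sum>l<n. const_smult (\<beta> l) (h * m l))"
    by (simp add: const_smult_def algebra_simps sum_distrib_left)
  also have "\<dots> \<in> I"
    using hm by (intro is_ideal_add[OF I] is_ideal_mult[OF I one] is_ideal_sum[OF I])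
      (simp add: const_smult_def is_ideal_mult[OF I])
  finally have "const_smult w h \<in> I" .
  moreover have "lead_coeff (char_poly Bm) = 1"
    using degree_monic_char_poly[OF Bm] by simp
  ultimately show ?thesis
    using w c unfolding h_def by blast
qed

lemma single_var_power:
  "Poly_Mapping.single (Poly_Mapping.single i 1) c ^ k
    = (Poly_Mapping.single (Poly_Mapping.single i k) (c ^ k) :: ('v, 'a::comm_ring_1) mpoly)"
  by (induction k) (simp_all add: mult_single single_add[symmetric] mult.commute)

lemma poly_map_single0_at_var:
  "poly (map_poly (Poly_Mapping.single 0) p) (Poly_Mapping.single (Poly_Mapping.single i 1) c)
    = (\<Sum>k\<le>degree p. Poly_Mapping.single (Poly_Mapping.single i k) (coeff p k * c ^ k) :: ('v, 'a::comm_ring_1) mpoly)"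
proof -
  have "poly (map_poly (Poly_Mapping.single 0) p) (Poly_Mapping.single (Poly_Mapping.single i 1) c)
    = (\<Sum>k\<le>degree p. Poly_Mapping.single (Poly_Mapping.single i 1) c ^ k * Poly_Mapping.single 0 (coeff p k))"
    unfolding eval_poly_def[symmetric] by (rule eval_poly_as_sum) simp
  also have "\<dots> = (\<Sum>k\<le>degree p. Poly_Mapping.single (Poly_Mapping.single i k) (coeff p k * c ^ k))"
    by (rule sum.cong[OF refl]) (simp only: single_var_power mult_single add_0_left add_0_right mult.commute)
  finally show ?thesis .
qed

context monomial_ordering
begin

lemma coeff_ideal_inf_not_subset_if_monic_relation:
  fixes I :: "('v, 'a::comm_ring_1) mpoly set"
  assumes I: "is_ideal I" and P: "prime_ideal P" and p: "lead_coeff p = 1" and "w \<notin> P" "c \<notin> P"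
    and rel: "const_smult w (poly (map_poly (Poly_Mapping.single 0) p) (Poly_Mapping.single (Poly_Mapping.single i 1) c)) \<in> I"
  shows "\<not> coeff_ideal_inf (init_ideal le I) i \<subseteq> P"
proof -
  define n where "n = degree p"
  define a where "a k = (case k of 0 \<Rightarrow> 0 | Suc k \<Rightarrow> w * (coeff p k * c ^ k))" for k
  \<comment> \<open>H = x_i w p(c x_i); the factor x_i makes the exponent positive, since
    \<open>coeff_ideal_inf\<close> only involves the powers x_i^k with k >= 1.\<close>
  define H where "H = (\<Sum>k\<le>Suc n. Poly_Mapping.single (Poly_Mapping.single i k) (a k))"
  have "H = (\<Sum>k\<le>n. Poly_Mapping.single (Poly_Mapping.single i (Suc k)) (w * (coeff p k * c ^ k)))"
    unfolding H_def sum.atMost_Suc_shift by (simp add: a_def)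
  also have "\<dots> = const_smult w (poly (map_poly (Poly_Mapping.single 0) p) (Poly_Mapping.single (Poly_Mapping.single i 1) c))
      * Poly_Mapping.single (Poly_Mapping.single i 1) 1"
    unfolding poly_map_single0_at_var n_def
    by (simp add: const_smult_def sum_distrib_left sum_distrib_right mult_single single_add[symmetric])
  finally have "H = \<dots>" .
  then have "H \<in> I"
    using is_ideal_mult[OF I rel] by (simp add: mult.commute)
  have "a (Suc n) = w * c ^ n"
    using p by (simp add: a_def n_def)
  then have a: "a (Suc n) \<notin> P"
    using prime_ideal_mult_notin[OF P \<open>w \<notin> P\<close> prime_ideal_power_notin[OF P \<open>c \<notin> P\<close>]] by simp
  then have "a (Suc n) \<noteq> 0"
    using is_ideal_zero[OF prime_ideal_is_ideal[OF P]] by auto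
  then have lead: "lead_monom le H = Poly_Mapping.single i (Suc n)"
    unfolding H_def by (rule lead_monom_sum_single_powers)
  have coeff: "Poly_Mapping.lookup H (Poly_Mapping.single i (Suc n)) = a (Suc n)"
    unfolding H_def by (rule lookup_sum_single_powers) simp
  with \<open>a (Suc n) \<noteq> 0\<close> have "H \<noteq> 0" by auto
  from lead_coeff_mem_coeff_ideal_inf[OF \<open>H \<in> I\<close> this lead] coeff a show ?thesis
    by auto
qed

lemma coeff_ideal_inf_not_subset_if_loc_fin_gen:
  fixes I :: "('v, 'a::comm_ring_1) mpoly set"
  assumes I: "is_ideal I" and P: "prime_ideal P" and "loc_fin_gen const_smult I P"
  shows "\<not> coeff_ideal_inf (init_ideal le I) i \<subseteq> P"
proof -
  obtain p w c where p: "lead_coeff p = 1" and w: "w \<notin> P" and c: "c \<notin> P" and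
    rel: "const_smult w (poly (map_poly (Poly_Mapping.single 0) p)
      (const_smult c (Poly_Mapping.single (Poly_Mapping.single i 1) 1))) \<in> I"
    using monic_relation_if_loc_fin_gen[OF I P assms(3), where t = "Poly_Mapping.single (Poly_Mapping.single i 1) 1"]
    by blast
  from rel have "const_smult w (poly (map_poly (Poly_Mapping.single 0) p)
      (Poly_Mapping.single (Poly_Mapping.single i 1) c)) \<in> I"
    by (simp only: const_smult_single mult_1_right)
  then show ?thesis
    by (rule coeff_ideal_inf_not_subset_if_monic_relation[OF I P p w c])
qed

end

lemma loc_fin_gen_if_coeff_ideal_inf_not_subset:
  fixes le :: "('v::finite \<Rightarrow>\<^sub>0 nat) \<Rightarrow> ('v \<Rightarrow>\<^sub>0 nat) \<Rightarrow> bool"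
    and I :: "('v, 'a::comm_ring_1) mpoly set"
  assumes mo: "monomial_order le" and I: "is_ideal I" and P: "prime_ideal P"
    and not_subset: "\<And>i. \<not> coeff_ideal_inf (init_ideal le I) i \<subseteq> P"
  shows "loc_fin_gen const_smult I P"
proof -
  have "\<forall>i. \<exists>f k. f \<in> I \<and> lead_monom le f = Poly_Mapping.single i k \<and>
      Poly_Mapping.lookup f (Poly_Mapping.single i k) \<notin> P"
    using lead_power_if_coeff_ideal_inf_not_subset[OF prime_ideal_is_ideal[OF P] not_subset] by blast
  from choice[OF this] obtain f where "\<forall>i. \<exists>k. f i \<in> I \<and>
      lead_monom le (f i) = Poly_Mapping.single i k \<and> Poly_Mapping.lookup (f i) (Poly_Mapping.single i k) \<notin> P" ..
  from choice[OF this] obtain k where f: "\<forall>i. f i \<in> I \<and>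
      lead_monom le (f i) = Poly_Mapping.single i (k i) \<and>
      Poly_Mapping.lookup (f i) (Poly_Mapping.single i (k i)) \<notin> P" ..
  show ?thesis
    by (rule loc_fin_gen_if_lead_powers[OF mo I P, where f = f and k = k]) (use f in simp_all)
qed

theorem proposition5p3:
  fixes le :: "('v::finite \<Rightarrow>\<^sub>0 nat) \<Rightarrow> ('v \<Rightarrow>\<^sub>0 nat) \<Rightarrow> bool"
    and I :: "('v, 'a::comm_ring_1) mpoly set"
    and P :: "'a set"
  assumes "noetherian_ring TYPE('a)"
    and "monomial_order le"
    and "is_ideal I"
    and "prime_ideal P"
  shows "loc_fin_gen const_smult I P \<longleftrightarrow>
         (\<forall>i. ext_ideal_unit (coeff_ideal_inf (init_ideal le I) i) P)"
proof -
  interpret monomial_ordering le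
    by (rule monomial_ordering.intro) fact
  show ?thesis
    unfolding ext_ideal_unit_iff[OF assms(4)]
  proof (intro iffI allI)
    show "\<not> coeff_ideal_inf (init_ideal le I) i \<subseteq> P" if "loc_fin_gen const_smult I P" for i
      by (rule coeff_ideal_inf_not_subset_if_loc_fin_gen[OF assms(3,4) that])
    show "loc_fin_gen const_smult I P" if "\<forall>i. \<not> coeff_ideal_inf (init_ideal le I) i \<subseteq> P"
      using loc_fin_gen_if_coeff_ideal_inf_not_subset[OF assms(2-4)] that by blast
  qed
qed

end
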